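(* Let $\lambda<0$, $a>0$, $c\in\mathbb{R}$, and let $\Omega=[\omega^-,\omega^+]$ with $\omega^-<0<\omega^+$. Consider the control system on $\mathbb{R}^2$ $$\dot s=\omega,\qquad \dot t=\lambda t+\omega(c+as),\qquad \omega\in\Omega .$$ For $\omega\in\Omega$ define $F_\omega:\mathbb{R}^2\to\mathbb{R}$, $F_\omega(s,t)=\lambda^2 t+\omega\big(\lambda(c+as)+a\omega\big)$. Let $\mathbf v_a=(-c/a,0)$; for constant control $\omega$ the solution from $\mathbf v_a$ is $\varphi(\tau,\mathbf v_a,\omega)=\big(-\tfrac ca+\tau\omega,\ \tfrac{a\omega^2}{\lambda^2}(e^{\lambda\tau}-\lambda\tau-1)\big)$. Define $$\mathcal C^-=\{\mathbf v\in\mathbb{R}^2: F_{\omega^-}(\mathbf v)<0\text{ and }F_{\omega^+}(\mathbf v)<0\},$$ $$\mathcal C^+=\{(s,t)\in\mathbb{R}^2:\ \exists\,\tau\ge 0,\ \exists\,\omega\in\{\omega^-,\omega^+\}\text{ with } s=\varphi_1(\tau,\mathbf v_a,\omega)\text{ and } t>\varphi_2(\tau,\mathbf v_a,\omega)\}.$$ Then: (1) $\mathcal C^-$ and $\mathcal C^+$ are invariant in negative time: for every constant control $\omega\in\Omega$, every $\mathbf v$ in the set and every $\tau\le 0$, $\varphi(\tau,\mathbf v,\omega)$ lies in the same set. (2) For any $\omega_1,\omega_2\in\Omega$ with $\omega_1<0<\omega_2$, the region $\mathcal C(\omega_1,\omega_2)=\{\mathbf v\in\mathbb{R}^2: F_{\omega_1}(\mathbf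 v)\,F_{\omega_2}(\mathbf v)<0\}$ is controllable, i.e. for any $\mathbf v,\mathbf w\in\mathcal C(\omega_1,\omega_2)$ there exist a piecewise constant control $\omega(\cdot)$ with values in $\Omega$ and $\tau\ge0$ with $\varphi(\tau,\mathbf v,\omega)=\mathbf w$.
   Context: $\varphi(\tau,\mathbf v,\omega)=(\varphi_1,\varphi_2)$ denotes the solution of the system at time $\tau$ starting at $\mathbf v$ with control $\omega$ (controls are piecewise constant functions with values in $\Omega$). *)

theory Defs
  imports "HOL-Analysis.Analysis"
begin

text \<open>System: s' = w, t' = lam t + w (c + a s). Points are pairs (s,t).
  Flow for a constant control w, time tau (any sign), closed form of the linear ODE.\<close>
definition flow :: "real \<Rightarrow> real \<Rightarrow> real \<Rightarrow> real \<Rightarrow> real \<Rightarrow> real \<times> real \<Rightarrow> real \<times> real" where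
  "flow lam a c w tau v =
     (let s0 = fst v; t0 = snd v; u = c + a * s0;
          A = - a * w\<^sup>2 / lam\<^sup>2 - w * u / lam;
          B = - a * w\<^sup>2 / lam
      in (s0 + tau * w, (t0 - A) * exp (lam * tau) + A + B * tau))"

text \<open>Piecewise constant control: a finite list of (value, duration) pieces,
  applied in order. The solution at the total time is obtained by composing flows.\<close>
fun flow_pc :: "real \<Rightarrow> real \<Rightarrow> real \<Rightarrow> (real \<times> real) list \<Rightarrow> real \<times> real \<Rightarrow> real \<times> real" where
  "flow_pc lam a c [] v = v"
| "flow_pc lam a c ((w, d) # ps) v = flow_pc lam a c ps (flow lam a c w d v)"

definition admissible_pc :: "real set \<Rightarrow> (real \<times> real) list \<Rightarrow> bool" where
  "admissible_pc Om ps \<longleftrightarrow> (\<forall>(w, d) \<in> set ps. w \<in> Om \<and> 0 \<le> d)"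

definition total_time :: "(real \<times> real) list \<Rightarrow> real" where
  "total_time ps = sum_list (map snd ps)"

definition Ffun :: "real \<Rightarrow> real \<Rightarrow> real \<Rightarrow> real \<Rightarrow> real \<times> real \<Rightarrow> real" where
  "Ffun lam a c w v = lam\<^sup>2 * snd v + w * (lam * (c + a * fst v) + a * w)"

definition va :: "real \<Rightarrow> real \<Rightarrow> real \<times> real" where
  "va a c = (- c / a, 0)"

definition Cminus :: "real \<Rightarrow> real \<Rightarrow> real \<Rightarrow> real \<Rightarrow> real \<Rightarrow> (real \<times> real) set" where
  "Cminus lam a c wm wp = {v. Ffun lam a c wm v < 0 \<and> Ffun lam a c wp v < 0}"

definition Cplus :: "real \<Rightarrow> real \<Rightarrow> real \<Rightarrow> real \<Rightarrow> real \<Rightarrow> (real \<times> real) set" where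
  "Cplus lam a c wm wp = {(s, t). \<exists>tau \<ge> 0. \<exists>w \<in> {wm, wp}.
      s = fst (flow lam a c w tau (va a c)) \<and> t > snd (flow lam a c w tau (va a c))}"

definition Creg :: "real \<Rightarrow> real \<Rightarrow> real \<Rightarrow> real \<Rightarrow> real \<Rightarrow> (real \<times> real) set" where
  "Creg lam a c w1 w2 = {v. Ffun lam a c w1 v * Ffun lam a c w2 v < 0}"

end

theory Submission
  imports Defs
begin

(* For a constant control w \<noteq> 0 every orbit is a graph over the s-axis,
   t = Froot w s + K exp (lam s / w): the straight w-orbit t = Froot w s plus an exponential
   term, and F_w (s, t) = lam^2 (t - Froot w s).

   Along a backward w-trajectory F_w' changes by F_w (e^x - 1 - x) + x Fsplit w w' with
   x = lam tau \<ge> 0. Fsplit w w' is affine in w and in w' and Fsplit w w = F_w; on C- it is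
   negative at the four corners of [wm, wp]^2, hence everywhere, so C- is backward invariant.

   C+ is the region above the forward halves of the orbits of va under wm and wp. Lying above
   a nonnegative w0-orbit graph is preserved by the backward flow of every w with
   w0 (w0 - w) \<ge> 0; a point that crosses the line s = -c/a is then above the other orbit as
   well, because the parabola t = a (s + c/a)^2 / 2 separates the two orbits there.

   For controllability follow v forward under one control and u backward under the other.
   The backward orbit of u grows exponentially, so far to the left (w1 then w2) and far to
   the right (w2 then w1) its gap to the forward orbit of v has the sign of F_w2 (u),
   respectively F_w1 (u). When these signs differ, the gaps at the two starting abscissae
   cannot both have the sign of their far end, and the intermediate value theorem yields a
   meeting point on one of the two sides. *)

definition Froot :: "real \<Rightarrow> real \<Rightarrow> real \<Rightarrow> real \<Rightarrow> real \<Rightarrow> real" where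
  "Froot lam a c w s = - a * w\<^sup>2 / lam\<^sup>2 - w * (c + a * s) / lam"

lemma Ffun_eq_Froot: "lam \<noteq> 0 \<Longrightarrow> Ffun lam a c w v = lam\<^sup>2 * (snd v - Froot lam a c w (fst v))"
  by (simp add: Ffun_def Froot_def field_simps power2_eq_square)

lemma fst_flow [simp]: "fst (flow lam a c w tau v) = fst v + tau * w"
  by (simp add: flow_def Let_def)

lemma snd_flow:
  "snd (flow lam a c w tau v) =
     (snd v - Froot lam a c w (fst v)) * exp (lam * tau) + Froot lam a c w (fst v + tau * w)"
  by (cases "lam = 0") (simp_all add: flow_def Let_def Froot_def field_simps power2_eq_square)

lemma flow_0 [simp]: "flow lam a c w 0 v = v"
  by (simp add: flow_def Let_def)

lemma flow_add: "flow lam a c w t1 (flow lam a c w t2 v) = flow lam a c w (t1 + t2) v"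
  by (rule prod_eqI) (simp_all add: snd_flow exp_add algebra_simps)

lemma snd_flow_has_real_derivative:
  assumes "lam \<noteq> 0"
  shows "((\<lambda>tau. snd (flow lam a c w tau v)) has_real_derivative
           lam * snd (flow lam a c w tau v) + w * (c + a * fst (flow lam a c w tau v))) (at tau)"
  unfolding snd_flow fst_flow Froot_def using assms
  by (auto intro!: derivative_eq_intros simp: field_simps power2_eq_square)

definition Fsplit :: "real \<Rightarrow> real \<Rightarrow> real \<Rightarrow> real \<Rightarrow> real \<Rightarrow> real \<times> real \<Rightarrow> real" where
  "Fsplit lam a c w w' v = lam\<^sup>2 * snd v + w * (lam * (c + a * fst v) + a * w')"

lemma Ffun_eq_Fsplit: "Ffun lam a c w v = Fsplit lam a c w w v"
  by (simp add: Ffun_def Fsplit_def)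

lemma Ffun_flow:
  assumes "lam \<noteq> 0"
  shows "Ffun lam a c w' (flow lam a c w tau v) =
           Ffun lam a c w' v + Ffun lam a c w v * (exp (lam * tau) - 1 - lam * tau)
           + lam * tau * Fsplit lam a c w w' v"
  using assms by (simp add: Ffun_def Fsplit_def snd_flow Froot_def field_simps power2_eq_square)

lemma affine_neg_between:
  fixes p q x lo hi :: real
  assumes "lo \<le> x" "x \<le> hi" "p + q * lo < 0" "p + q * hi < 0"
  shows "p + q * x < 0"
proof (cases "0 \<le> q")
  case True
  then have "q * x \<le> q * hi" using assms(2) by (simp add: mult_left_mono)
  then show ?thesis using assms(4) by linarith
next
  case False
  then have "q * x \<le> q * lo" using assms(1) by (simp add: mult_left_mono_neg)
  then show ?thesis using assms(3) by linarith
qed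

lemma Fsplit_neg_on_Cminus:
  assumes "a > 0" "wm < 0" "0 < wp" "v \<in> Cminus lam a c wm wp"
    and "w \<in> {wm..wp}" "w' \<in> {wm..wp}"
  shows "Fsplit lam a c w w' v < 0"
proof -
  let ?F = "\<lambda>w w'. Fsplit lam a c w w' v"
  have diag: "?F wm wm < 0" "?F wp wp < 0"
    using assms(4) by (simp_all add: Cminus_def Ffun_eq_Fsplit)
  have "?F wm wp = ?F wm wm + a * wm * (wp - wm)" "?F wp wm = ?F wp wp + a * wp * (wm - wp)"
    by (simp_all add: Fsplit_def algebra_simps)
  moreover have "a * wm * (wp - wm) < 0" "a * wp * (wm - wp) < 0"
    using assms(1-3) by (simp_all add: mult_pos_neg mult_neg_pos)
  ultimately have off_diag: "?F wm wp < 0" "?F wp wm < 0"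
    using diag by linarith+
  have affine: "?F w w' = lam\<^sup>2 * snd v + (lam * (c + a * fst v) + a * w') * w"
               "?F w w' = (lam\<^sup>2 * snd v + w * lam * (c + a * fst v)) + (w * a) * w'" for w w'
    by (simp_all add: Fsplit_def algebra_simps)
  have "?F w0 w' < 0" if "w0 \<in> {wm, wp}" for w0
    using affine_neg_between[of wm w' wp] that assms(6) diag off_diag
    unfolding affine(2) by auto
  then show ?thesis
    using affine_neg_between[of wm w wp] assms(5) unfolding affine(1) by auto
qed

lemma Cminus_flow_backward:
  assumes "lam < 0" "a > 0" "wm < 0" "0 < wp"
    and "w \<in> {wm..wp}" "v \<in> Cminus lam a c wm wp" "tau \<le> 0"
  shows "flow lam a c w tau v \<in> Cminus lam a c wm wp"
proof -
  have "Ffun lam a c w' (flow lam a c w tau v) \<le> Ffun lam a c w' v" if "w' \<in> {wm..wp}" for w'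
  proof -
    have "0 \<le> exp (lam * tau) - 1 - lam * tau"
      using exp_ge_add_one_self[of "lam * tau"] by linarith
    then have "Ffun lam a c w v * (exp (lam * tau) - 1 - lam * tau) \<le> 0"
      using Fsplit_neg_on_Cminus[OF assms(2-4,6,5,5)]
      by (simp add: Ffun_eq_Fsplit mult_nonpos_nonneg)
    moreover have "lam * tau * Fsplit lam a c w w' v \<le> 0"
      using Fsplit_neg_on_Cminus[OF assms(2-4,6,5) that] assms(1,7)
      by (simp add: mult_nonneg_nonpos zero_le_mult_iff)
    ultimately show ?thesis
      using Ffun_flow[of lam a c w' w tau v] assms(1) by simp
  qed
  from this[of wm] this[of wp] show ?thesis
    using assms(3,4,6) by (simp add: Cminus_def)
qed

(* The w-orbit through p as a function of s; only meaningful for w \<noteq> 0. *)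
definition orbit_graph :: "real \<Rightarrow> real \<Rightarrow> real \<Rightarrow> real \<Rightarrow> real \<times> real \<Rightarrow> real \<Rightarrow> real" where
  "orbit_graph lam a c w p x = snd (flow lam a c w ((x - fst p) / w) p)"

lemma flow_to_abscissa:
  "w \<noteq> 0 \<Longrightarrow> flow lam a c w ((x - fst p) / w) p = (x, orbit_graph lam a c w p x)"
  by (rule prod_eqI) (simp_all add: orbit_graph_def)

lemma orbit_graph_at_start [simp]: "orbit_graph lam a c w p (fst p) = snd p"
  by (simp add: orbit_graph_def)

lemma orbit_graph_eq:
  "w \<noteq> 0 \<Longrightarrow> orbit_graph lam a c w p x =
     (snd p - Froot lam a c w (fst p)) * exp (lam * ((x - fst p) / w)) + Froot lam a c w x"
  by (simp add: orbit_graph_def snd_flow)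

lemma orbit_graph_has_real_derivative:
  assumes "lam \<noteq> 0" "w \<noteq> 0"
  shows "(orbit_graph lam a c w p has_real_derivative
           (lam * orbit_graph lam a c w p x + w * (c + a * x)) / w) (at x)"
proof -
  have graph: "orbit_graph lam a c w p = (\<lambda>x. (snd p - Froot lam a c w (fst p))
      * exp (lam * ((x - fst p) / w)) - a * w\<^sup>2 / lam\<^sup>2 - w * (c + a * x) / lam)"
    using assms(2) by (simp add: orbit_graph_eq Froot_def fun_eq_iff)
  show ?thesis
    unfolding graph using assms
    by (auto intro!: derivative_eq_intros simp: field_simps power2_eq_square)
qed

lemma orbit_graph_va:
  assumes "lam \<noteq> 0" "a \<noteq> 0" "w \<noteq> 0"
  shows "orbit_graph lam a c w (va a c) s =
           a * w\<^sup>2 / lam\<^sup>2 * (exp (lam * (s + c / a) / w) - lam * (s + c / a) / w - 1)"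
  using assms by (simp add: orbit_graph_eq va_def Froot_def field_simps power2_eq_square)

lemma orbit_graph_va_nonneg:
  assumes "lam \<noteq> 0" "a > 0" "w \<noteq> 0"
  shows "0 \<le> orbit_graph lam a c w (va a c) s"
proof -
  have "0 \<le> exp (lam * (s + c / a) / w) - lam * (s + c / a) / w - 1"
    using exp_ge_add_one_self[of "lam * (s + c / a) / w"] by linarith
  then show ?thesis using assms by (simp add: orbit_graph_va)
qed

lemma exp_upper_Taylor_quadratic_nonpos:
  fixes x :: real
  assumes "x \<le> 0"
  shows "exp x \<le> 1 + x + x\<^sup>2 / 2"
proof -
  obtain t where "exp x = (\<Sum>m<3. x ^ m / fact m) + exp t / fact 3 * x ^ 3"
    using Maclaurin_exp_le[of x 3] by blast
  moreover have "x ^ 3 \<le> 0"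
    using assms by (simp add: power_le_zero_eq)
  then have "exp t / fact 3 * x ^ 3 \<le> 0"
    by (intro mult_nonneg_nonpos) simp_all
  ultimately show ?thesis
    by (simp add: numeral_3_eq_3 power2_eq_square)
qed

lemma orbit_graph_va_le_opposite:
  assumes "lam < 0" "a > 0" "w0 \<noteq> 0" "w1 \<noteq> 0"
    and "(s + c / a) / w0 \<le> 0" "0 \<le> (s + c / a) / w1"
  shows "orbit_graph lam a c w1 (va a c) s \<le> orbit_graph lam a c w0 (va a c) s"
proof -
  define X where "X w = lam * (s + c / a) / w" for w
  have graph: "orbit_graph lam a c w (va a c) s = a * w\<^sup>2 / lam\<^sup>2 * (exp (X w) - X w - 1)"
    if "w \<noteq> 0" for w
    using that assms(1,2) by (simp add: orbit_graph_va X_def)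
  have parabola: "a * w\<^sup>2 / lam\<^sup>2 * ((X w)\<^sup>2 / 2) = a * (s + c / a)\<^sup>2 / 2" if "w \<noteq> 0" for w
    using that assms(1) by (simp add: X_def field_simps power2_eq_square)
  have "X w1 \<le> 0" "0 \<le> X w0"
    using mult_nonpos_nonneg[of lam "(s + c / a) / w1"]
      mult_nonpos_nonpos[of lam "(s + c / a) / w0"] assms(1,5,6) by (simp_all add: X_def)
  then have "exp (X w1) - X w1 - 1 \<le> (X w1)\<^sup>2 / 2" "(X w0)\<^sup>2 / 2 \<le> exp (X w0) - X w0 - 1"
    using exp_upper_Taylor_quadratic_nonpos exp_lower_Taylor_quadratic by (smt (verit))+
  moreover have "0 \<le> a * w\<^sup>2 / lam\<^sup>2" for w
    using assms(2) by simp
  ultimately have "orbit_graph lam a c w1 (va a c) s \<le> a * (s + c / a)\<^sup>2 / 2"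
            "a * (s + c / a)\<^sup>2 / 2 \<le> orbit_graph lam a c w0 (va a c) s"
    using assms(3,4) graph parabola by (metis mult_left_mono)+
  then show ?thesis by linarith
qed

lemma Cplus_iff:
  assumes "a > 0" "wm \<noteq> 0" "wp \<noteq> 0"
  shows "v \<in> Cplus lam a c wm wp \<longleftrightarrow>
    (\<exists>w0\<in>{wm, wp}. 0 \<le> (fst v + c / a) / w0 \<and> orbit_graph lam a c w0 (va a c) (fst v) < snd v)"
proof -
  have arc: "fst v = fst (flow lam a c w0 tau (va a c)) \<longleftrightarrow> tau = (fst v + c / a) / w0"
    if "w0 \<noteq> 0" for w0 tau
    using that assms(1) by (auto simp: va_def field_simps)
  have "snd (flow lam a c w0 ((fst v + c / a) / w0) (va a c))
          = orbit_graph lam a c w0 (va a c) (fst v)" for w0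
    by (simp add: orbit_graph_def va_def)
  then show ?thesis
    using arc assms(2,3) by (cases v) (auto simp: Cplus_def)
qed

lemma above_orbit_graph_flow_backward:
  assumes "lam < 0" "w0 \<noteq> 0" "0 \<le> w0 * (w0 - w)" "\<And>x. 0 \<le> orbit_graph lam a c w0 p x"
    and "tau \<le> 0" "orbit_graph lam a c w0 p (fst v) < snd v"
  shows "orbit_graph lam a c w0 p (fst (flow lam a c w tau v)) < snd (flow lam a c w tau v)"
proof -
  let ?g = "orbit_graph lam a c w0 p"
  let ?S = "\<lambda>x. snd (flow lam a c w x v)"
  define \<psi> where "\<psi> x = (?S x - ?g (fst v + x * w)) * exp (- lam * x)" for x
  have lam: "lam \<noteq> 0" using assms(1) by simp
  have "(\<psi> has_real_derivative
          lam * ?g (fst v + x * w) * ((w0 - w) / w0) * exp (- lam * x)) (at x)" for x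
  proof -
    have "((\<lambda>x. ?g (fst v + x * w)) has_real_derivative
            (lam * ?g (fst v + x * w) + w0 * (c + a * (fst v + x * w))) / w0 * w) (at x)"
      by (rule DERIV_chain2[OF orbit_graph_has_real_derivative[OF lam assms(2)]])
        (auto intro!: derivative_eq_intros)
    moreover have "((\<lambda>x. exp (- lam * x)) has_real_derivative exp (- lam * x) * (- lam)) (at x)"
      by (auto intro!: derivative_eq_intros)
    ultimately have "(\<psi> has_real_derivative
        (lam * ?S x + w * (c + a * fst (flow lam a c w x v))
          - (lam * ?g (fst v + x * w) + w0 * (c + a * (fst v + x * w))) / w0 * w) * exp (- lam * x)
        + exp (- lam * x) * (- lam) * (?S x - ?g (fst v + x * w))) (at x)"
      unfolding \<psi>_def by (intro DERIV_mult DERIV_diff snd_flow_has_real_derivative[OF lam])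
    then show ?thesis
      by (rule DERIV_cong) (use assms(2) in \<open>simp add: field_simps\<close>)
  qed
  moreover have "lam * ?g (fst v + x * w) * ((w0 - w) / w0) * exp (- lam * x) \<le> 0" for x
  proof -
    have "0 \<le> (w0 - w) / w0"
      using assms(2,3) by (cases "w0 > 0") (auto simp: zero_le_mult_iff divide_nonneg_pos
          divide_nonpos_neg)
    then show ?thesis
      using assms(1) assms(4)[of "fst v + x * w"] by (intro mult_nonpos_nonneg) simp_all
  qed
  ultimately have "\<psi> 0 \<le> \<psi> tau"
    by (intro DERIV_nonpos_imp_nonincreasing[OF assms(5)]) blast
  then have "0 < (?S tau - ?g (fst v + tau * w)) * exp (- lam * tau)"
    using assms(6) by (simp add: \<psi>_def)
  then show ?thesis
    by (simp add: zero_less_mult_iff)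
qed

lemma Cplus_flow_backward:
  assumes "lam < 0" "a > 0" "wm < 0" "0 < wp"
    and "w \<in> {wm..wp}" "v \<in> Cplus lam a c wm wp" "tau \<le> 0"
  shows "flow lam a c w tau v \<in> Cplus lam a c wm wp"
proof -
  have nz: "wm \<noteq> 0" "wp \<noteq> 0" "lam \<noteq> 0" using assms(1,3,4) by auto
  define v' where "v' = flow lam a c w tau v"
  obtain w0 where w0: "w0 \<in> {wm, wp}" and "orbit_graph lam a c w0 (va a c) (fst v) < snd v"
    using assms(6) unfolding Cplus_iff[OF assms(2) nz(1,2)] by blast
  moreover have w0_nz: "w0 \<noteq> 0" and "0 \<le> w0 * (w0 - w)"
    using w0 assms(3-5) by (auto simp: mult_nonpos_nonpos)
  ultimately have above: "orbit_graph lam a c w0 (va a c) (fst v') < snd v'"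
    unfolding v'_def using orbit_graph_va_nonneg[OF nz(3) assms(2)]
    by (intro above_orbit_graph_flow_backward[OF assms(1)] assms(7)) auto
  have "\<exists>w1\<in>{wm, wp}. 0 \<le> (fst v' + c / a) / w1
          \<and> orbit_graph lam a c w1 (va a c) (fst v') \<le> orbit_graph lam a c w0 (va a c) (fst v')"
  proof (cases "0 \<le> (fst v' + c / a) / w0")
    case True
    then show ?thesis using w0 by blast
  next
    case False
    define w1 where "w1 = (if w0 = wm then wp else wm)"
    have w1: "w1 \<in> {wm, wp}" "w1 \<noteq> 0" "0 \<le> (fst v' + c / a) / w1"
      using False w0 assms(3,4) by (auto simp: w1_def zero_le_divide_iff)
    then have "orbit_graph lam a c w1 (va a c) (fst v') \<le> orbit_graph lam a c w0 (va a c) (fst v')"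
      using False w0_nz by (intro orbit_graph_va_le_opposite[OF assms(1,2)]) auto
    with w1 show ?thesis by blast
  qed
  then show ?thesis
    using above unfolding v'_def Cplus_iff[OF assms(2) nz(1,2)] by fastforce
qed

lemma exp_exceeds_affine:
  fixes A B C gam m :: real
  assumes "0 < C" "0 < gam"
  shows "\<exists>x\<ge>m. A + B * x \<le> C * exp (gam * x)"
proof -
  define x where "x = max m (max 1 (2 * (\<bar>A\<bar> + \<bar>B\<bar>) / (C * gam\<^sup>2)))"
  have x: "m \<le> x" "1 \<le> x" "2 * (\<bar>A\<bar> + \<bar>B\<bar>) / (C * gam\<^sup>2) \<le> x"
    by (auto simp: x_def)
  from x(3) have x3: "2 * (\<bar>A\<bar> + \<bar>B\<bar>) \<le> C * gam\<^sup>2 * x"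
    using assms by (simp add: pos_divide_le_eq mult.commute)
  have "B * x \<le> \<bar>B\<bar> * x" "\<bar>A\<bar> \<le> \<bar>A\<bar> * x"
    using x(2) by (simp_all add: mult_right_mono mult_le_cancel_left1)
  then have "A + B * x \<le> (\<bar>A\<bar> + \<bar>B\<bar>) * x"
    by (simp add: distrib_right)
  also have "\<dots> \<le> C * (gam * x)\<^sup>2 / 2"
    using mult_right_mono[OF x3, of x] x(2) by (simp add: power2_eq_square algebra_simps)
  also have "\<dots> \<le> C * exp (gam * x)"
  proof -
    have "0 \<le> gam * x" using assms(2) x(2) by simp
    then have "(gam * x)\<^sup>2 / 2 \<le> exp (gam * x)"
      using exp_lower_Taylor_quadratic[of "gam * x"] by linarith
    then show ?thesis using assms(1) by simp
  qed
  finally show ?thesis using x(1) by blast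
qed

lemma exp_dominates_affine:
  fixes f :: "real \<Rightarrow> real"
  assumes "0 < gam" "0 < S * K"
    and "\<And>x. m \<le> x \<Longrightarrow> \<bar>f x - (K * exp (gam * x) + \<alpha> + \<beta> * x)\<bar> \<le> R"
  shows "\<exists>x\<ge>m. 0 \<le> S * f x"
proof -
  have "0 < \<bar>K\<bar>" using assms(2) by auto
  then obtain x where x: "max m 0 \<le> x" "\<bar>\<alpha>\<bar> + R + \<bar>\<beta>\<bar> * x \<le> \<bar>K\<bar> * exp (gam * x)"
    using exp_exceeds_affine[OF _ assms(1)] by blast
  have "\<bar>\<alpha> + \<beta> * x\<bar> \<le> \<bar>\<alpha>\<bar> + \<bar>\<beta>\<bar> * x"
    using x(1) abs_triangle_ineq[of \<alpha> "\<beta> * x"] by (simp add: abs_mult)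
  then have "\<bar>f x - K * exp (gam * x)\<bar> \<le> \<bar>K\<bar> * exp (gam * x)"
    using assms(3)[of x] x by linarith
  then have "\<bar>K\<bar> * \<bar>f x - K * exp (gam * x)\<bar> \<le> \<bar>K\<bar> * (\<bar>K\<bar> * exp (gam * x))"
    by (rule mult_left_mono) simp
  also have "\<dots> = K\<^sup>2 * exp (gam * x)"
    by (subst mult.assoc[symmetric]) (simp add: power2_eq_square)
  finally have "\<bar>K * (f x - K * exp (gam * x))\<bar> \<le> K\<^sup>2 * exp (gam * x)"
    by (simp add: abs_mult)
  moreover have "K * f x = K * (f x - K * exp (gam * x)) + K\<^sup>2 * exp (gam * x)"
    by (simp add: power2_eq_square algebra_simps)
  ultimately have "0 \<le> K * f x"
    by linarith
  then have "0 \<le> K\<^sup>2 * (S * f x)"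
    using assms(2) mult_nonneg_nonneg[of "S * K" "K * f x"] by (simp add: power2_eq_square ac_simps)
  then show ?thesis
    using assms(2) x(1) by (auto simp: zero_le_mult_iff)
qed

lemma orbit_graph_gap_sign:
  assumes "w \<noteq> 0"
  shows "0 \<le> (orbit_graph lam a c w p x - orbit_graph lam a c w q x)
              * (orbit_graph lam a c w p y - orbit_graph lam a c w q y)"
proof -
  define C where "C = (snd p - Froot lam a c w (fst p)) * exp (- lam * fst p / w)
                      - (snd q - Froot lam a c w (fst q)) * exp (- lam * fst q / w)"
  have split: "exp (lam * ((z - s) / w)) = exp (lam * z / w) * exp (- lam * s / w)" for z s
    by (simp add: exp_add[symmetric] diff_divide_distrib algebra_simps)
  have gap: "orbit_graph lam a c w p z - orbit_graph lam a c w q z = exp (lam * z / w) * C" for z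
    unfolding orbit_graph_eq[OF assms] split C_def by (simp add: algebra_simps)
  have square: "exp (lam * x / w) * C * (exp (lam * y / w) * C)
                  = exp (lam * x / w) * exp (lam * y / w) * C\<^sup>2"
    by (simp add: power2_eq_square ac_simps)
  show ?thesis
    unfolding gap square by simp
qed

lemma reach_through_meeting_point:
  assumes "w \<noteq> 0" "w' \<noteq> 0" "orbit_graph lam a c w v x = orbit_graph lam a c w' u x"
    and "0 \<le> (x - fst v) / w" "0 \<le> (fst u - x) / w'"
  shows "\<exists>tau\<ge>0. \<exists>sigma\<ge>0. flow lam a c w' sigma (flow lam a c w tau v) = u"
proof -
  have "flow lam a c w ((x - fst v) / w) v = flow lam a c w' ((x - fst u) / w') u"
    using assms(1-3) by (simp add: flow_to_abscissa)
  moreover have "(fst u - x) / w' + (x - fst u) / w' = 0"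
    by (simp add: diff_divide_distrib)
  ultimately have "flow lam a c w' ((fst u - x) / w') (flow lam a c w ((x - fst v) / w) v) = u"
    by (simp add: flow_add)
  then show ?thesis
    using assms(4,5) by blast
qed

lemma continuous_root_left_or_right:
  fixes P Q :: "real \<Rightarrow> real"
  assumes "\<And>x. isCont P x" "\<And>x. isCont Q x"
    and "x0 \<le> m" "0 \<le> P x0" "M \<le> x1" "0 \<le> Q x1" "P m * Q M \<le> 0"
  shows "(\<exists>x\<le>m. P x = 0) \<or> (\<exists>x\<ge>M. Q x = 0)"
proof -
  consider "P m \<le> 0" | "Q M \<le> 0"
    using assms(7) by (fastforce simp: mult_le_0_iff)
  then show ?thesis
  proof cases
    case 1
    then show ?thesis
      using IVT2[of P m 0 x0] assms(1,3,4) by auto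
  next
    case 2
    then show ?thesis
      using IVT[of Q M 0 x1] assms(2,5,6) by auto
  qed
qed

lemma backward_orbit_overtakes:
  assumes "lam < 0" "w * w' < 0"
  shows "\<exists>x. (x - fst u) / w \<le> 0 \<and> 0 \<le> (x - fst v) / w'
           \<and> 0 \<le> Ffun lam a c w u * (orbit_graph lam a c w u x - orbit_graph lam a c w' v x)"
proof -
  have nz: "lam \<noteq> 0" "w \<noteq> 0" "w' \<noteq> 0" using assms by auto
  define K where "K = snd u - Froot lam a c w (fst u)"
  define K' where "K' = snd v - Froot lam a c w' (fst v)"
  define \<alpha> where "\<alpha> = a * (w'\<^sup>2 - w\<^sup>2) / lam\<^sup>2 - (w - w') * (c + a * fst u) / lam"
  define \<beta> where "\<beta> = a * w * (w - w') / lam"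
  define x where "x \<sigma> = fst u - \<sigma> * w" for \<sigma>
  define f where "f \<sigma> = orbit_graph lam a c w u (x \<sigma>) - orbit_graph lam a c w' v (x \<sigma>)" for \<sigma>
  have times: "(x \<sigma> - fst u) / w \<le> 0 \<and> 0 \<le> (x \<sigma> - fst v) / w'"
    if "max 0 ((fst u - fst v) / w) \<le> \<sigma>" for \<sigma>
    using that assms(2) nz(2)
    by (cases "w > 0")
      (auto simp: x_def mult_less_0_iff zero_le_divide_iff divide_le_eq le_divide_eq algebra_simps)
  have bound: "\<bar>f \<sigma> - (K * exp (- lam * \<sigma>) + \<alpha> + \<beta> * \<sigma>)\<bar> \<le> \<bar>K'\<bar>"
    if "max 0 ((fst u - fst v) / w) \<le> \<sigma>" for \<sigma>
  proof -
    have "f \<sigma> - (K * exp (- lam * \<sigma>) + \<alpha> + \<beta> * \<sigma>) = - K' * exp (lam * ((x \<sigma> - fst v) / w'))"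
      using nz by (simp add: f_def orbit_graph_eq K_def K'_def \<alpha>_def \<beta>_def x_def Froot_def
          field_simps power2_eq_square)
    moreover have "exp (lam * ((x \<sigma> - fst v) / w')) \<le> 1"
      using times[OF that] assms(1) mult_nonpos_nonneg[of lam "(x \<sigma> - fst v) / w'"] by simp
    ultimately show ?thesis
      by (simp add: abs_mult mult_left_le)
  qed
  have Ffun_u: "Ffun lam a c w u = lam\<^sup>2 * K"
    using nz by (simp add: Ffun_eq_Froot K_def)
  have "\<exists>\<sigma>\<ge>max 0 ((fst u - fst v) / w). 0 \<le> Ffun lam a c w u * f \<sigma>"
  proof (cases "K = 0")
    case True
    then show ?thesis by (auto simp: Ffun_u intro: exI[of _ "max 0 ((fst u - fst v) / w)"])
  next
    case False
    then have "0 < Ffun lam a c w u * K"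
      using nz by (simp add: Ffun_u mult.assoc flip: power2_eq_square)
    then show ?thesis
      using exp_dominates_affine[where gam = "- lam" and m = "max 0 ((fst u - fst v) / w)",
          OF _ _ bound] assms(1)
      by simp
  qed
  then obtain \<sigma> where \<sigma>: "max 0 ((fst u - fst v) / w) \<le> \<sigma>" "0 \<le> Ffun lam a c w u * f \<sigma>"
    by blast
  show ?thesis
    using times[OF \<sigma>(1)] \<sigma>(2) unfolding f_def by blast
qed

lemma reachable_by_two_arcs:
  assumes "lam < 0" "w1 < 0" "0 < w2" "Ffun lam a c w1 u * Ffun lam a c w2 u < 0"
  shows "\<exists>tau\<ge>0. \<exists>sigma\<ge>0. flow lam a c w2 sigma (flow lam a c w1 tau v) = u
                         \<or> flow lam a c w1 sigma (flow lam a c w2 tau v) = u"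
proof -
  have nz: "lam \<noteq> 0" "w1 \<noteq> 0" "w2 \<noteq> 0" using assms(1-3) by auto
  let ?g = "orbit_graph lam a c"
  define m where "m = min (fst u) (fst v)"
  define M where "M = max (fst u) (fst v)"
  define P where "P x = Ffun lam a c w2 u * (?g w2 u x - ?g w1 v x)" for x
  define Q where "Q x = Ffun lam a c w1 u * (?g w1 u x - ?g w2 v x)" for x
  have cont: "isCont P x" "isCont Q x" for x
    unfolding P_def Q_def
    by (intro continuous_intros DERIV_isCont[OF orbit_graph_has_real_derivative] nz)+
  have opposite: "w2 * w1 < 0" "w1 * w2 < 0"
    using assms(2,3) by (simp_all add: mult_pos_neg mult_neg_pos)
  obtain x0 where x0: "x0 \<le> m" "0 \<le> P x0"
    using backward_orbit_overtakes[OF assms(1) opposite(1), where u = u and v = v] assms(2,3)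
    by (auto simp: P_def m_def mult_neg_pos divide_le_0_iff zero_le_divide_iff)
  obtain x1 where x1: "M \<le> x1" "0 \<le> Q x1"
    using backward_orbit_overtakes[OF assms(1) opposite(2), where u = u and v = v] assms(2,3)
    by (auto simp: Q_def M_def mult_neg_pos divide_le_0_iff zero_le_divide_iff)
  have "0 \<le> (?g w2 u m - ?g w1 v m) * (?g w1 u M - ?g w2 v M)"
  proof (cases "fst v \<le> fst u")
    case True
    then show ?thesis
      using orbit_graph_gap_sign[OF nz(3), where lam = lam and a = a and c = c and p = u and q = v
          and x = "fst v" and y = "fst u"]
      by (simp add: m_def M_def)
  next
    case False
    then show ?thesis
      using orbit_graph_gap_sign[OF nz(2), where lam = lam and a = a and c = c and p = u and q = v
          and x = "fst u" and y = "fst v"]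
      by (simp add: m_def M_def)
  qed
  moreover have "P m * Q M = (Ffun lam a c w1 u * Ffun lam a c w2 u)
      * ((?g w2 u m - ?g w1 v m) * (?g w1 u M - ?g w2 v M))"
    unfolding P_def Q_def by (simp add: mult_ac)
  ultimately have "P m * Q M \<le> 0"
    using assms(4) by (simp add: mult_nonpos_nonneg)
  then consider x where "P x = 0" "x \<le> m" | x where "Q x = 0" "M \<le> x"
    using continuous_root_left_or_right[OF cont x0 x1] by blast
  then show ?thesis
  proof cases
    case (1 x)
    then have "?g w1 v x = ?g w2 u x" "0 \<le> (x - fst v) / w1" "0 \<le> (fst u - x) / w2"
      using assms(2-4) by (auto simp: P_def m_def zero_le_divide_iff)
    then show ?thesis
      using reach_through_meeting_point[OF nz(2,3)] by blast
  next
    case (2 x)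
    then have "?g w2 v x = ?g w1 u x" "0 \<le> (x - fst v) / w2" "0 \<le> (fst u - x) / w1"
      using assms(2-4) by (auto simp: Q_def M_def zero_le_divide_iff)
    then show ?thesis
      using reach_through_meeting_point[OF nz(3,2)] by blast
  qed
qed

theorem lemma1:
  fixes lam a c wm wp :: real
  assumes "lam < 0" and "a > 0" and "wm < 0" and "0 < wp"
  shows "(\<forall>w \<in> {wm..wp}. \<forall>v \<in> Cminus lam a c wm wp. \<forall>tau \<le> 0.
            flow lam a c w tau v \<in> Cminus lam a c wm wp)
       \<and> (\<forall>w \<in> {wm..wp}. \<forall>v \<in> Cplus lam a c wm wp. \<forall>tau \<le> 0.
            flow lam a c w tau v \<in> Cplus lam a c wm wp)
       \<and> (\<forall>w1 \<in> {wm..wp}. \<forall>w2 \<in> {wm..wp}. w1 < 0 \<and> 0 < w2 \<longrightarrow>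
            (\<forall>v \<in> Creg lam a c w1 w2. \<forall>u \<in> Creg lam a c w1 w2.
               \<exists>ps. admissible_pc {wm..wp} ps \<and> 0 \<le> total_time ps \<and>
                    flow_pc lam a c ps v = u))"
proof (intro conjI ballI allI impI)
  show "flow lam a c w tau v \<in> Cminus lam a c wm wp"
    if "w \<in> {wm..wp}" "v \<in> Cminus lam a c wm wp" "tau \<le> 0" for w v tau
    using Cminus_flow_backward[OF assms that] .
  show "flow lam a c w tau v \<in> Cplus lam a c wm wp"
    if "w \<in> {wm..wp}" "v \<in> Cplus lam a c wm wp" "tau \<le> 0" for w v tau
    using Cplus_flow_backward[OF assms that] .
  fix w1 w2 v u
  assume w: "w1 \<in> {wm..wp}" "w2 \<in> {wm..wp}" "w1 < 0 \<and> 0 < w2"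
    and "v \<in> Creg lam a c w1 w2" "u \<in> Creg lam a c w1 w2"
    \<comment> \<open>only the target u has to lie in the region\<close>
  then have "w1 < 0" "0 < w2" "Ffun lam a c w1 u * Ffun lam a c w2 u < 0"
    by (simp_all add: Creg_def)
  from reachable_by_two_arcs[OF assms(1) this, where v = v]
  obtain tau sigma where "0 \<le> tau" "0 \<le> sigma"
    and "flow_pc lam a c [(w1, tau), (w2, sigma)] v = u
         \<or> flow_pc lam a c [(w2, tau), (w1, sigma)] v = u"
    by auto
  moreover have "admissible_pc {wm..wp} ps \<and> 0 \<le> total_time ps"
    if "ps \<in> {[(w1, tau), (w2, sigma)], [(w2, tau), (w1, sigma)]}" for ps
    using that w \<open>0 \<le> tau\<close> \<open>0 \<le> sigma\<close> by (auto simp: admissible_pc_def total_time_def)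
  ultimately show "\<exists>ps. admissible_pc {wm..wp} ps \<and> 0 \<le> total_time ps \<and> flow_pc lam a c ps v = u"
    by blast
qed

end
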